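(* For every integer $d\ge1$ and every integer $0\le i\le d$, $$a\Big(\tbinom{d+2}{2}-1,\,d+1,\,i\Big)\ \ge\ a\Big(\tbinom{d+2}{2},\,d+1,\,i\Big).$$
   Context: $a(n,k,l)$ denotes the number of integer vectors $(a_1,\dots,a_l)$ with $a_1+\dots+a_l=n$ and $1\le a_j\le k$ for all $j$. *)

theory Defs
  imports Main
begin

definition a :: "int \<Rightarrow> int \<Rightarrow> nat \<Rightarrow> nat" where
  "a n k l = card {xs :: int list. length xs = l \<and> sum_list xs = n \<and>
                    (\<forall>x\<in>set xs. 1 \<le> x \<and> x \<le> k)}"

end

theory Submission
  imports Defs
begin

text \<open>
  Reflecting every entry, x \<mapsto> k + 1 - x, shows that a(n,k,l) is symmetric about the
  centre n = l(k+1)/2. Splitting off the first entry gives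
  a(n,k,l+1) = a(n-1,k,l) + ... + a(n-k,k,l), hence
  a(n+1,k,l+1) - a(n,k,l+1) = a(n,k,l) - a(n-k,k,l). Past the centre of a(\<cdot>,k,l+1),
  the point n-k is at least as close to the centre of a(\<cdot>,k,l) as n, so by induction on l
  and symmetry a(\<cdot>,k,l) is nonincreasing to the right of its centre. Finally
  n = C(d+2,2) - 1 lies to the right of the centre i(d+2)/2 because i \<le> d.
\<close>

definition bounded_compositions :: "int \<Rightarrow> int \<Rightarrow> nat \<Rightarrow> int list set" where
  "bounded_compositions n k l =
     {xs. length xs = l \<and> sum_list xs = n \<and> (\<forall>x\<in>set xs. 1 \<le> x \<and> x \<le> k)}"

lemma a_eq_card_bounded_compositions: "a n k l = card (bounded_compositions n k l)"
  unfolding a_def bounded_compositions_def ..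

lemma finite_bounded_compositions: "finite (bounded_compositions n k l)"
proof (rule finite_subset)
  show "bounded_compositions n k l \<subseteq> {xs. set xs \<subseteq> {1..k} \<and> length xs = l}"
    unfolding bounded_compositions_def by auto
qed (simp add: finite_lists_length_eq)

lemma a_0: "a n k 0 = (if n = 0 then 1 else 0)"
proof -
  have "bounded_compositions n k 0 = (if n = 0 then {[]} else {})"
    unfolding bounded_compositions_def by auto
  then show ?thesis
    by (simp add: a_eq_card_bounded_compositions)
qed

lemma bounded_compositions_Suc:
  "bounded_compositions n k (Suc l) = (\<Union>j\<in>{1..k}. (#) j ` bounded_compositions (n - j) k l)"
  unfolding bounded_compositions_def by (auto simp: length_Suc_conv)

lemma a_Suc: "a n k (Suc l) = (\<Sum>j\<in>{1..k}. a (n - j) k l)"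
proof -
  have "card (bounded_compositions n k (Suc l)) =
        (\<Sum>j\<in>{1..k}. card ((#) j ` bounded_compositions (n - j) k l))"
    unfolding bounded_compositions_Suc
    by (rule card_UN_disjoint) (auto simp: finite_bounded_compositions)
  then show ?thesis
    by (simp add: a_eq_card_bounded_compositions card_image)
qed

lemma a_symmetric: "a n k l = a (int l * (k + 1) - n) k l"
proof -
  let ?reflect = "map (\<lambda>x. k + 1 - x)"
  have "bij_betw ?reflect (bounded_compositions n k l)
          (bounded_compositions (int l * (k + 1) - n) k l)"
    by (rule bij_betw_byWitness[where f' = ?reflect])
       (auto simp: bounded_compositions_def sum_list_subtractf sum_list_triv comp_def)
  then show ?thesis
    unfolding a_eq_card_bounded_compositions by (rule bij_betw_same_card)
qed

lemma a_Suc_step: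
  assumes "1 \<le> k"
  shows "a (n + 1) k (Suc l) + a (n - k) k l = a n k (Suc l) + a n k l"
proof -
  let ?f = "\<lambda>j. a (n - j) k l"
  have "a (n + 1) k (Suc l) = (\<Sum>j\<in>{0..k - 1}. ?f j)"
    unfolding a_Suc
    by (rule sum.reindex_bij_witness[where i = "\<lambda>j. j + 1" and j = "\<lambda>j. j - 1"])
       (auto simp: algebra_simps)
  also have "\<dots> + ?f k = (\<Sum>j\<in>{0..k}. ?f j)"
    using assms by (simp add: atLeastAtMostPlus1_int_conv[of 0 "k - 1", simplified])
  also have "\<dots> = ?f 0 + (\<Sum>j\<in>{1..k}. ?f j)"
    using assms by (simp add: simp_from_to[of 0 k])
  finally show ?thesis
    by (simp add: a_Suc)
qed

lemma symmetric_unimodal_le: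
  fixes f :: "int \<Rightarrow> 'a::linorder"
  assumes symmetric: "\<And>n. f (L - n) = f n"
    and decreasing: "\<And>n. L \<le> 2 * n \<Longrightarrow> f (n + 1) \<le> f n"
    and closer: "\<bar>2 * m - L\<bar> \<le> \<bar>2 * n - L\<bar>"
  shows "f n \<le> f m"
proof -
  have antimono: "f y \<le> f x" if "L \<le> 2 * x" "x \<le> y" for x y
    using \<open>x \<le> y\<close>
  proof (induction y rule: int_ge_induct)
    case (step y)
    then show ?case
      using decreasing[of y] \<open>L \<le> 2 * x\<close> order_trans by fastforce
  qed simp
  define reflect where "reflect x = (if L \<le> 2 * x then x else L - x)" for x
  have "f (reflect n) \<le> f (reflect m)"
    by (rule antimono) (use closer in \<open>auto simp: reflect_def\<close>)
  moreover have "f (reflect x) = f x" for x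
    by (simp add: reflect_def symmetric)
  ultimately show ?thesis
    by simp
qed

lemma a_succ_le:
  assumes "1 \<le> k" and "int l * (k + 1) \<le> 2 * n"
  shows "a (n + 1) k l \<le> a n k l"
  using assms(2)
proof (induction l arbitrary: n)
  case 0
  then show ?case
    by (simp add: a_0)
next
  case (Suc l)
  have "a n k l \<le> a (n - k) k l"
  proof (rule symmetric_unimodal_le[where L = "int l * (k + 1)"])
    show "a (int l * (k + 1) - x) k l = a x k l" for x
      by (simp add: a_symmetric[of x])
    show "a (x + 1) k l \<le> a x k l" if "int l * (k + 1) \<le> 2 * x" for x
      using that by (rule Suc.IH)
    show "\<bar>2 * (n - k) - int l * (k + 1)\<bar> \<le> \<bar>2 * n - int l * (k + 1)\<bar>"
      using Suc.prems assms(1) by (simp add: algebra_simps)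
  qed
  then show ?case
    using a_Suc_step[OF assms(1), of n l] by simp
qed

theorem lemma6p2:
  fixes d i :: nat
  assumes "1 \<le> d" and "i \<le> d"
  shows "a (int ((d + 2) choose 2) - 1) (int d + 1) i \<ge> a (int ((d + 2) choose 2)) (int d + 1) i"
proof -
  have "int (2 * ((d + 2) choose 2)) = int ((d + 2) * (d + 1))"
    unfolding choose_two by simp
  then have "2 * int ((d + 2) choose 2) = (int d + 2) * (int d + 1)"
    by (simp add: algebra_simps)
  moreover have "int i * (int d + 2) \<le> int d * (int d + 2)"
    using assms(2) by (simp add: mult_right_mono)
  ultimately have "int i * (int d + 1 + 1) \<le> 2 * (int ((d + 2) choose 2) - 1)"
    by (simp add: algebra_simps)
  then show ?thesis
    using a_succ_le[of "int d + 1" i "int ((d + 2) choose 2) - 1"] by simp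
qed

end
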